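(* Let $a\in(0,1)$, $\kappa_1\in(a,1)$, $\kappa_2\in(0,1)$ and $r\ge1$ satisfy simultaneously $r\le \dfrac{as}{\sqrt{5\log(2/(1-a/\kappa_1))}}$ and $\dfrac{4}{\kappa_2}\le r\le\dfrac{as}{\sqrt{5\log(8/\kappa_2)}}$. Let $y_1,\dots,y_n\in\mathbb{R}^d$ be any points and suppose $$S_{a,r}\le \|\theta^*\|\min\{a(1/\kappa_1-1),\ r(1-\kappa_2)\}.$$ Then $M_n(\mathcal{D}_{a,r})\subseteq\mathcal{D}_{a,r}$, i.e. $M_n$ maps $\mathcal{D}_{a,r}$ into itself.
   Context: Fix $d\ge1$, $\sigma>0$ and $\theta^*\in\mathbb{R}^d\setminus\{0\}$. Let $Y$ be distributed according to the mixture $\tfrac12 N(\theta^*,\sigma^2I_d)+\tfrac12 N(-\theta^*,\sigma^2I_d)$. Let $\omega(t):=1/(1+e^{-2t})$. The population EM operator is $M(\theta):=2\,\mathbb{E}\big[Y\,\omega(\langle\theta,Y\rangle/\sigma^2)\big]$, and the sample EM operator built from points $y_1,\dots,y_n$ is $M_n(\theta):=\frac2n\sum_{i=1}^n y_i\,\omega(\langle y_i,\theta\rangle/\sigma^2)-\frac1n\sum_{i=1}^n y_i$. The signal-to-noise ratio is $s:=\|\theta^*\|/\sigma$. For $a\in(0,1)$ and $r\ge1$ define $\mathcal{H}_a:=\{\theta:\langle\theta,\theta^*\rangle\ge a\|\theta^*\|^2\}$, $\mathcal{B}_r:=\{\theta:\|\theta\|\le r\|\theta^*\|\}$, $\mathcal{D}_{a,r}:=\mathcal{H}_a\cap\mathcal{B}_r$,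 and $S_{a,r}:=\sup_{\theta\in\mathcal{D}_{a,r}}\|M_n(\theta)-M(\theta)\|$. *)

theory Defs
  imports "HOL-Analysis.Analysis"
begin

definition omega :: "real \<Rightarrow> real" where
  "omega t = 1 / (1 + exp (-2 * t))"

definition gauss_pdf :: "real \<Rightarrow> 'a::euclidean_space \<Rightarrow> 'a \<Rightarrow> real" where
  "gauss_pdf \<sigma> \<mu> y =
     (2 * pi * \<sigma>\<^sup>2) powr (- real DIM('a) / 2) * exp (- (norm (y - \<mu>))\<^sup>2 / (2 * \<sigma>\<^sup>2))"

definition mix_law :: "real \<Rightarrow> 'a::euclidean_space \<Rightarrow> 'a measure" where
  "mix_law \<sigma> \<theta>s = density lborel
     (\<lambda>y. ennreal (1/2 * gauss_pdf \<sigma> \<theta>s y + 1/2 * gauss_pdf \<sigma> (- \<theta>s) y))"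

definition M_pop :: "real \<Rightarrow> 'a::euclidean_space \<Rightarrow> 'a \<Rightarrow> 'a" where
  "M_pop \<sigma> \<theta>s \<theta> = 2 *\<^sub>R (\<integral>y. omega ((\<theta> \<bullet> y) / \<sigma>\<^sup>2) *\<^sub>R y \<partial>mix_law \<sigma> \<theta>s)"

definition M_samp :: "real \<Rightarrow> (nat \<Rightarrow> 'a::euclidean_space) \<Rightarrow> nat \<Rightarrow> 'a \<Rightarrow> 'a" where
  "M_samp \<sigma> y n \<theta> =
     (2 / real n) *\<^sub>R (\<Sum>i<n. omega ((y i \<bullet> \<theta>) / \<sigma>\<^sup>2) *\<^sub>R y i)
     - (1 / real n) *\<^sub>R (\<Sum>i<n. y i)"

definition H_set :: "'a::euclidean_space \<Rightarrow> real \<Rightarrow> 'a set" where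
  "H_set \<theta>s a = {\<theta>. \<theta> \<bullet> \<theta>s \<ge> a * (norm \<theta>s)\<^sup>2}"

definition B_set :: "'a::euclidean_space \<Rightarrow> real \<Rightarrow> 'a set" where
  "B_set \<theta>s r = {\<theta>. norm \<theta> \<le> r * norm \<theta>s}"

definition D_set :: "'a::euclidean_space \<Rightarrow> real \<Rightarrow> real \<Rightarrow> 'a set" where
  "D_set \<theta>s a r = H_set \<theta>s a \<inter> B_set \<theta>s r"

definition S_dev :: "real \<Rightarrow> 'a::euclidean_space \<Rightarrow> (nat \<Rightarrow> 'a) \<Rightarrow> nat \<Rightarrow> real \<Rightarrow> real \<Rightarrow> real" where
  "S_dev \<sigma> \<theta>s y n a r =
     (SUP \<theta>\<in>D_set \<theta>s a r. norm (M_samp \<sigma> y n \<theta> - M_pop \<sigma> \<theta>s \<theta>))"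

end

theory Submission
  imports Defs "HOL-Probability.Probability"
begin

text \<open>Reflecting the second mixture component gives
  \<open>\<langle>M(\<theta>), u\<rangle> = \<langle>\<theta>*, u\<rangle> - 2 E[(1 - \<omega>(\<langle>\<theta>, Y\<rangle>/\<sigma>\<^sup>2)) \<langle>Y, u\<rangle>]\<close> with
  \<open>Y \<sim> N(\<theta>*, \<sigma>\<^sup>2 I)\<close>. The bounds \<open>1 - \<omega>(t) \<le> exp (-2 l t)\<close> and
  \<open>e |x| \<le> K (exp (x/K) + exp (-x/K))\<close> turn the correction term into values of the Gaussian moment
  generating function; for \<open>l = a/(2r\<^sup>2)\<close> and \<open>K = \<parallel>\<theta>*\<parallel>\<^sup>2\<close> the first signal-to-noise condition
  makes it at most \<open>\<delta>\<^sup>2 \<parallel>\<theta>*\<parallel>\<^sup>2 / 2\<close>, where \<open>\<delta> = 1 - a/\<kappa>1\<close>. Hence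
  \<open>\<langle>M(\<theta>), \<theta>*\<rangle> \<ge> (a/\<kappa>1) \<parallel>\<theta>*\<parallel>\<^sup>2\<close> on \<open>D\<close>, and the Chernoff bound \<open>e \<eta> x \<le> exp (\<eta> x)\<close> gives
  \<open>\<parallel>M(\<theta>)\<parallel> \<le> 4 \<parallel>\<theta>*\<parallel>\<close> once \<open>\<sigma> \<le> \<parallel>\<theta>*\<parallel>\<close>. A deviation \<open>\<parallel>M\<^sub>n(\<theta>) - M(\<theta>)\<parallel> \<le> S\<close> within the
  stated budget therefore keeps \<open>M\<^sub>n(\<theta>)\<close> in both \<open>H\<^sub>a\<close> and \<open>B\<^sub>r\<close>.\<close>

lemma exp_one_mult_le_exp: "exp 1 * z \<le> exp (z :: real)"
proof -
  have "exp 1 * z \<le> exp 1 * exp (z - 1)"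
    using exp_ge_add_one_self[of "z - 1"] by simp
  then show ?thesis
    by (simp add: exp_add[symmetric])
qed

lemma exp_one_mult_abs_le: "exp 1 * \<bar>z\<bar> \<le> exp z + exp (- z :: real)"
proof (cases "z \<ge> 0")
  case True
  then have "exp 1 * \<bar>z\<bar> \<le> exp z"
    using exp_one_mult_le_exp[of z] by simp
  then show ?thesis
    using exp_gt_zero[of "- z"] by linarith
next
  case False
  then have "exp 1 * \<bar>z\<bar> \<le> exp (- z)"
    using exp_one_mult_le_exp[of "- z"] by simp
  then show ?thesis
    using exp_gt_zero[of z] by linarith
qed

lemma exp_half_le_2: "exp (1/2 :: real) \<le> 2"
proof -
  have "exp (1/2 :: real) ^ 2 = exp 1"
    by (simp add: exp_of_nat_mult[symmetric])
  also have "\<dots> \<le> 2 ^ 2"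
    using exp_le by simp
  finally show ?thesis
    by (rule power2_le_imp_le) simp
qed

lemma ln_two_div_ge:
  fixes \<delta> :: real
  assumes "0 < \<delta>" "\<delta> \<le> 1"
  shows "2/3 \<le> ln (2 / \<delta>)"
proof -
  have "ln 2 \<le> ln (2 / \<delta>)"
    using assms by (subst ln_le_cancel_iff) (auto simp: field_simps)
  then show ?thesis
    using ln2_ge_two_thirds by linarith
qed

lemma power2_le_if_le_div_sqrt:
  fixes b c r :: real
  assumes "0 < c" "0 \<le> r" "r \<le> b / sqrt c"
  shows "c * r\<^sup>2 \<le> b\<^sup>2"
proof -
  have "sqrt c * r \<le> b"
    using assms by (simp add: pos_le_divide_eq mult.commute)
  then have "(sqrt c * r)\<^sup>2 \<le> b\<^sup>2"
    using assms by (intro power_mono) auto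
  then show ?thesis
    using assms by (simp add: power_mult_distrib)
qed

lemma le_norm_if_snr:
  fixes v :: "'a::real_normed_vector"
  assumes "\<sigma> > 0" "1 \<le> c" "1 \<le> r" "0 < a" "a \<le> 1" "c * r\<^sup>2 \<le> a\<^sup>2 * (norm v / \<sigma>)\<^sup>2"
  shows "\<sigma> \<le> norm v"
proof -
  have "1 \<le> c * r\<^sup>2"
    using assms mult_mono[OF assms(2) one_le_power[OF assms(3)]] by simp
  also have "\<dots> \<le> (norm v / \<sigma>)\<^sup>2"
    using assms(6) mult_right_mono[of "a\<^sup>2" 1 "(norm v / \<sigma>)\<^sup>2"] assms(4,5)
    by (simp add: power_le_one)
  finally have "1\<^sup>2 \<le> (norm v / \<sigma>)\<^sup>2"
    by simp
  then have "1 \<le> norm v / \<sigma>"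
    by (rule power2_le_imp_le) (use assms(1) in simp)
  then show ?thesis
    using assms(1) by (simp add: field_simps)
qed

lemma norm_scaleR_add_scaleR_power2:
  "(norm (s *\<^sub>R x + t *\<^sub>R z))\<^sup>2 = s\<^sup>2 * (norm x)\<^sup>2 + 2 * s * t * (x \<bullet> z) + t\<^sup>2 * (norm z)\<^sup>2"
  unfolding power2_norm_eq_inner
  by (simp add: inner_add_left inner_add_right inner_commute[of z x] power2_eq_square algebra_simps)

lemma norm_power2_eq_sum_Basis: "(norm x)\<^sup>2 = (\<Sum>b\<in>Basis. (x \<bullet> b)\<^sup>2)"
  for x :: "'a::euclidean_space"
  unfolding power2_norm_eq_inner by (subst euclidean_inner) (simp add: power2_eq_square)

lemma inner_ge_if_norm_diff_le:
  fixes x z u :: "'a::real_inner"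
  assumes "b * (norm u)\<^sup>2 \<le> x \<bullet> u" "norm (z - x) \<le> (b - a) * norm u"
  shows "a * (norm u)\<^sup>2 \<le> z \<bullet> u"
proof -
  have "- ((z - x) \<bullet> u) \<le> (b - a) * norm u * norm u"
    using Cauchy_Schwarz_ineq2[of "z - x" u] mult_right_mono[OF assms(2) norm_ge_zero[of u]]
    by linarith
  then show ?thesis
    using assms(1) by (simp add: inner_diff_left power2_eq_square algebra_simps)
qed

section \<open>Gaussian integrals\<close>

lemma integrable_euclidean_componentwise:
  fixes f :: "'b \<Rightarrow> 'a::euclidean_space"
  assumes "\<And>b. b \<in> Basis \<Longrightarrow> integrable M (\<lambda>x. f x \<bullet> b)"
  shows "integrable M f"
proof -
  have "integrable M (\<lambda>x. \<Sum>b\<in>Basis. (f x \<bullet> b) *\<^sub>R b)"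
    by (intro Bochner_Integration.integrable_sum integrable_scaleR_left assms)
  then show ?thesis
    by (simp add: euclidean_representation)
qed

definition gauss_mgf :: "real \<Rightarrow> 'a::euclidean_space \<Rightarrow> 'a \<Rightarrow> real" where
  "gauss_mgf \<sigma> \<mu> v = exp (v \<bullet> \<mu> + \<sigma>\<^sup>2 * (norm v)\<^sup>2 / 2)"

lemma gauss_pdf_nonneg: "0 \<le> gauss_pdf \<sigma> \<mu> y"
  unfolding gauss_pdf_def by simp

lemma borel_measurable_gauss_pdf[measurable]: "gauss_pdf \<sigma> \<mu> \<in> borel_measurable borel"
  unfolding gauss_pdf_def[abs_def] by measurable

lemma gauss_pdf_eq_prod_normal_density:
  fixes \<mu> y :: "'a::euclidean_space"
  assumes "\<sigma> > 0"
  shows "gauss_pdf \<sigma> \<mu> y = (\<Prod>b\<in>Basis. normal_density (\<mu> \<bullet> b) \<sigma> (y \<bullet> b))"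
proof -
  define c where "c = 2 * pi * \<sigma>\<^sup>2"
  have "c > 0" using assms by (simp add: c_def)
  then have "(c powr (1/2)) powr real DIM('a) = sqrt c ^ DIM('a)"
    by (simp add: powr_half_sqrt powr_realpow)
  then have "c powr (- real DIM('a) / 2) = (1 / sqrt c) ^ DIM('a)"
    by (simp add: powr_powr powr_minus power_one_over inverse_eq_divide)
  then have const: "c powr (- real DIM('a) / 2) = (\<Prod>b\<in>(Basis::'a set). 1 / sqrt c)"
    by simp
  have "- (norm (y - \<mu>))\<^sup>2 / (2 * \<sigma>\<^sup>2) = (\<Sum>b\<in>Basis. - (y \<bullet> b - \<mu> \<bullet> b)\<^sup>2 / (2 * \<sigma>\<^sup>2))"
    unfolding norm_power2_eq_sum_Basis[of "y - \<mu>"] sum_divide_distrib[symmetric] sum_negf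
      inner_diff_left ..
  then have "exp (- (norm (y - \<mu>))\<^sup>2 / (2 * \<sigma>\<^sup>2))
      = (\<Prod>b\<in>Basis. exp (- (y \<bullet> b - \<mu> \<bullet> b)\<^sup>2 / (2 * \<sigma>\<^sup>2)))"
    by (simp add: exp_sum)
  then have "gauss_pdf \<sigma> \<mu> y
      = (\<Prod>b\<in>(Basis::'a set). 1 / sqrt c) * (\<Prod>b\<in>Basis. exp (- (y \<bullet> b - \<mu> \<bullet> b)\<^sup>2 / (2 * \<sigma>\<^sup>2)))"
    unfolding gauss_pdf_def c_def[symmetric] const by (simp only:)
  also have "\<dots> = (\<Prod>b\<in>Basis. normal_density (\<mu> \<bullet> b) \<sigma> (y \<bullet> b))"
    unfolding prod.distrib[symmetric] normal_density_def c_def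
    by (rule prod.cong) (auto simp: power2_commute)
  finally show ?thesis .
qed

lemma exp_mult_normal_density:
  assumes "\<sigma> > 0"
  shows "exp (v * x) * normal_density m \<sigma> x
    = exp (v * m + \<sigma>\<^sup>2 * v\<^sup>2 / 2) * normal_density (m + \<sigma>\<^sup>2 * v) \<sigma> x"
proof -
  have "v * x + - (x - m)\<^sup>2 / (2 * \<sigma>\<^sup>2)
      = (v * m + \<sigma>\<^sup>2 * v\<^sup>2 / 2) + - (x - (m + \<sigma>\<^sup>2 * v))\<^sup>2 / (2 * \<sigma>\<^sup>2)"
    using assms by (simp add: field_simps power2_eq_square)
  then show ?thesis
    unfolding normal_density_def by (simp add: exp_add[symmetric] mult.left_commute)
qed

lemma nn_integral_exp_inner_gauss_pdf:
  fixes \<mu> v :: "'a::euclidean_space"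
  assumes "\<sigma> > 0"
  shows "(\<integral>\<^sup>+y. ennreal (exp (v \<bullet> y) * gauss_pdf \<sigma> \<mu> y) \<partial>lborel) = ennreal (gauss_mgf \<sigma> \<mu> v)"
proof -
  define f where "f b x = exp ((v \<bullet> b) * x) * normal_density (\<mu> \<bullet> b) \<sigma> x" for b x
  have "exp (v \<bullet> y) * gauss_pdf \<sigma> \<mu> y = (\<Prod>b\<in>Basis. f b (y \<bullet> b))" for y
    unfolding gauss_pdf_eq_prod_normal_density[OF assms] f_def prod.distrib
    by (subst euclidean_inner) (simp add: exp_sum mult.commute)
  then have "(\<integral>\<^sup>+y. ennreal (exp (v \<bullet> y) * gauss_pdf \<sigma> \<mu> y) \<partial>lborel)
      = (\<integral>\<^sup>+y. (\<Prod>b\<in>Basis. ennreal (f b (y \<bullet> b))) \<partial>lborel)"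
    by (simp add: prod_ennreal f_def)
  also have "\<dots> = (\<Prod>b\<in>Basis. \<integral>\<^sup>+x. ennreal (f b x) \<partial>lborel)"
    by (rule nn_integral_lborel_prod) (auto simp: f_def)
  also have "\<dots> = (\<Prod>b\<in>Basis. ennreal (exp ((v \<bullet> b) * (\<mu> \<bullet> b) + \<sigma>\<^sup>2 * (v \<bullet> b)\<^sup>2 / 2)))"
  proof (rule prod.cong[OF refl])
    fix b :: 'a
    have "(\<integral>\<^sup>+x. ennreal (f b x) \<partial>lborel)
        = ennreal (exp ((v \<bullet> b) * (\<mu> \<bullet> b) + \<sigma>\<^sup>2 * (v \<bullet> b)\<^sup>2 / 2))
          * (\<integral>\<^sup>+x. ennreal (normal_density (\<mu> \<bullet> b + \<sigma>\<^sup>2 * (v \<bullet> b)) \<sigma> x) \<partial>lborel)"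
      unfolding f_def exp_mult_normal_density[OF assms]
      by (simp add: ennreal_mult nn_integral_cmult)
    also have "(\<integral>\<^sup>+x. ennreal (normal_density (\<mu> \<bullet> b + \<sigma>\<^sup>2 * (v \<bullet> b)) \<sigma> x) \<partial>lborel) = 1"
      using assms by (subst nn_integral_eq_integral) auto
    finally show "(\<integral>\<^sup>+x. ennreal (f b x) \<partial>lborel)
        = ennreal (exp ((v \<bullet> b) * (\<mu> \<bullet> b) + \<sigma>\<^sup>2 * (v \<bullet> b)\<^sup>2 / 2))"
      by simp
  qed
  also have "\<dots> = ennreal (gauss_mgf \<sigma> \<mu> v)"
  proof -
    have "v \<bullet> \<mu> + \<sigma>\<^sup>2 * (norm v)\<^sup>2 / 2 = (\<Sum>b\<in>Basis. (v \<bullet> b) * (\<mu> \<bullet> b) + \<sigma>\<^sup>2 * (v \<bullet> b)\<^sup>2 / 2)"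
      unfolding norm_power2_eq_sum_Basis[of v] sum.distrib sum_distrib_left sum_divide_distrib
      by (subst euclidean_inner) simp
    then show ?thesis
      by (simp add: prod_ennreal gauss_mgf_def exp_sum)
  qed
  finally show ?thesis .
qed

lemma
  fixes \<mu> v :: "'a::euclidean_space"
  assumes "\<sigma> > 0"
  shows integrable_exp_inner_gauss_pdf: "integrable lborel (\<lambda>y. exp (v \<bullet> y) * gauss_pdf \<sigma> \<mu> y)"
    and integral_exp_inner_gauss_pdf: "(\<integral>y. exp (v \<bullet> y) * gauss_pdf \<sigma> \<mu> y \<partial>lborel) = gauss_mgf \<sigma> \<mu> v"
  using nn_integral_exp_inner_gauss_pdf[OF assms, of v \<mu>]
  by (auto intro!: integrableI_nonneg simp: integral_eq_nn_integral gauss_pdf_nonneg gauss_mgf_def)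

lemma
  fixes \<mu> :: "'a::euclidean_space"
  assumes "\<sigma> > 0"
  shows integrable_gauss_pdf: "integrable lborel (gauss_pdf \<sigma> \<mu>)"
    and integral_gauss_pdf: "(\<integral>y. gauss_pdf \<sigma> \<mu> y \<partial>lborel) = 1"
  using integrable_exp_inner_gauss_pdf[OF assms, of 0 \<mu>] integral_exp_inner_gauss_pdf[OF assms, of 0 \<mu>]
  by (simp_all add: gauss_mgf_def)

lemma lborel_integral_reflect:
  fixes F :: "'a::euclidean_space \<Rightarrow> real"
  assumes [measurable]: "F \<in> borel_measurable borel"
  shows "(\<integral>y. F y \<partial>lborel) = (\<integral>y. F (t - y) \<partial>lborel)"
proof -
  have "lborel = density (distr lborel borel (\<lambda>x::'a. t + (-1) *\<^sub>R x)) (\<lambda>_. \<bar>-1::real\<bar> ^ DIM('a))"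
    by (rule lborel_affine) simp
  then have "lborel = distr lborel borel (\<lambda>x::'a. t - x)"
    by (simp add: density_1)
  then have "(\<integral>y. F y \<partial>lborel) = (\<integral>y. F y \<partial>distr lborel borel (\<lambda>x::'a. t - x))"
    by simp
  also have "\<dots> = (\<integral>y. F (t - y) \<partial>lborel)"
    by (subst integral_distr) auto
  finally show ?thesis .
qed

lemma integrable_gauss_pdf_inner:
  fixes \<mu> u :: "'a::euclidean_space"
  assumes "\<sigma> > 0"
  shows "integrable lborel (\<lambda>y. gauss_pdf \<sigma> \<mu> y * (y \<bullet> u))"
proof (rule Bochner_Integration.integrable_bound)
  show "integrable lborel (\<lambda>y. exp (u \<bullet> y) * gauss_pdf \<sigma> \<mu> y + exp ((- u) \<bullet> y) * gauss_pdf \<sigma> \<mu> y)"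
    by (intro Bochner_Integration.integrable_add integrable_exp_inner_gauss_pdf assms)
  have "\<bar>x\<bar> \<le> exp x + exp (- x)" for x :: real
    using exp_ge_add_one_self[of x] exp_ge_add_one_self[of "- x"] exp_gt_zero[of x] exp_gt_zero[of "- x"]
    by linarith
  then have "gauss_pdf \<sigma> \<mu> y * \<bar>y \<bullet> u\<bar> \<le> gauss_pdf \<sigma> \<mu> y * (exp (y \<bullet> u) + exp (- (y \<bullet> u)))" for y
    by (intro mult_left_mono gauss_pdf_nonneg)
  then show "AE y in lborel. norm (gauss_pdf \<sigma> \<mu> y * (y \<bullet> u))
      \<le> norm (exp (u \<bullet> y) * gauss_pdf \<sigma> \<mu> y + exp ((- u) \<bullet> y) * gauss_pdf \<sigma> \<mu> y)"
    using gauss_pdf_nonneg[of \<sigma> \<mu>]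
    by (intro AE_I2) (simp add: abs_mult inner_commute distrib_left mult.commute)
qed simp

lemma integrable_weight_gauss_pdf_inner:
  fixes \<mu> u :: "'a::euclidean_space"
  assumes "\<sigma> > 0" and [measurable]: "w \<in> borel_measurable borel" and "\<And>y. \<bar>w y\<bar> \<le> 1"
  shows "integrable lborel (\<lambda>y. w y * gauss_pdf \<sigma> \<mu> y * (y \<bullet> u))"
proof (rule Bochner_Integration.integrable_bound)
  show "integrable lborel (\<lambda>y. gauss_pdf \<sigma> \<mu> y * (y \<bullet> u))"
    using assms(1) by (rule integrable_gauss_pdf_inner)
  show "AE y in lborel. norm (w y * gauss_pdf \<sigma> \<mu> y * (y \<bullet> u)) \<le> norm (gauss_pdf \<sigma> \<mu> y * (y \<bullet> u))"
  proof (rule AE_I2)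
    fix y
    have "\<bar>w y\<bar> * \<bar>gauss_pdf \<sigma> \<mu> y * (y \<bullet> u)\<bar> \<le> \<bar>gauss_pdf \<sigma> \<mu> y * (y \<bullet> u)\<bar>"
      using mult_right_mono[OF assms(3), of "\<bar>gauss_pdf \<sigma> \<mu> y * (y \<bullet> u)\<bar>" y] by simp
    then show "norm (w y * gauss_pdf \<sigma> \<mu> y * (y \<bullet> u)) \<le> norm (gauss_pdf \<sigma> \<mu> y * (y \<bullet> u))"
      by (simp add: abs_mult mult.assoc)
  qed
qed measurable

text \<open>The map \<open>y \<mapsto> 2\<mu> - y\<close> preserves the density and flips the sign of \<open>(y - \<mu>) \<bullet> u\<close>.\<close>
lemma integral_gauss_pdf_inner:
  fixes \<mu> u :: "'a::euclidean_space"
  assumes "\<sigma> > 0"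
  shows "(\<integral>y. gauss_pdf \<sigma> \<mu> y * (y \<bullet> u) \<partial>lborel) = \<mu> \<bullet> u"
proof -
  define F where "F y = gauss_pdf \<sigma> \<mu> y * ((y - \<mu>) \<bullet> u)" for y
  have [measurable]: "F \<in> borel_measurable borel"
    unfolding F_def[abs_def] by measurable
  have "F (2 *\<^sub>R \<mu> - y) = - F y" for y
  proof -
    have "gauss_pdf \<sigma> \<mu> (2 *\<^sub>R \<mu> - y) = gauss_pdf \<sigma> \<mu> y"
      unfolding gauss_pdf_def by (simp add: norm_minus_commute algebra_simps scaleR_2)
    moreover have "(2 *\<^sub>R \<mu> - y - \<mu>) \<bullet> u = - ((y - \<mu>) \<bullet> u)"
      by (simp add: algebra_simps scaleR_2 inner_diff_left)
    ultimately show ?thesis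
      unfolding F_def by simp
  qed
  then have "(\<integral>y. F y \<partial>lborel) = - (\<integral>y. F y \<partial>lborel)"
    using lborel_integral_reflect[of F "2 *\<^sub>R \<mu>"] by simp
  then have "(\<integral>y. F y \<partial>lborel) = 0"
    by simp
  moreover have "(\<lambda>y. gauss_pdf \<sigma> \<mu> y * (y \<bullet> u)) = (\<lambda>y. F y + (\<mu> \<bullet> u) * gauss_pdf \<sigma> \<mu> y)"
    unfolding F_def by (auto simp: inner_diff_left algebra_simps)
  moreover have "integrable lborel F"
  proof -
    have "integrable lborel (\<lambda>y. gauss_pdf \<sigma> \<mu> y * (y \<bullet> u) - (\<mu> \<bullet> u) * gauss_pdf \<sigma> \<mu> y)"
      by (intro Bochner_Integration.integrable_diff integrable_mult_right integrable_gauss_pdf_inner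
          integrable_gauss_pdf assms)
    then show ?thesis
      unfolding F_def by (simp add: inner_diff_left algebra_simps)
  qed
  ultimately show ?thesis
    using integrable_gauss_pdf[OF assms, of \<mu>] integral_gauss_pdf[OF assms, of \<mu>]
    by (simp add: Bochner_Integration.integral_add)
qed

lemma integral_bounded_weight_gauss_pdf_inner_le:
  fixes \<mu> u :: "'a::euclidean_space"
  assumes "\<sigma> > 0" "\<eta> > 0" and w: "\<And>y. 0 \<le> w y" "\<And>y. w y \<le> 1"
  shows "(\<integral>y. w y * gauss_pdf \<sigma> \<mu> y * (y \<bullet> u) \<partial>lborel) \<le> gauss_mgf \<sigma> \<mu> (\<eta> *\<^sub>R u) / (exp 1 * \<eta>)"
proof -
  have scalar: "w y * (y \<bullet> u) \<le> exp (\<eta> * (y \<bullet> u)) / (exp 1 * \<eta>)" for y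
  proof (cases "y \<bullet> u \<ge> 0")
    case True
    then have "w y * (y \<bullet> u) \<le> y \<bullet> u"
      using w(2)[of y] by (simp add: mult_left_le_one_le w(1))
    also have "\<dots> \<le> exp (\<eta> * (y \<bullet> u)) / (exp 1 * \<eta>)"
      using exp_one_mult_le_exp[of "\<eta> * (y \<bullet> u)"] \<open>\<eta> > 0\<close> by (simp add: field_simps)
    finally show ?thesis .
  next
    case False
    then have "w y * (y \<bullet> u) \<le> 0"
      using w(1)[of y] by (simp add: mult_nonneg_nonpos)
    also have "0 \<le> exp (\<eta> * (y \<bullet> u)) / (exp 1 * \<eta>)"
      using \<open>\<eta> > 0\<close> by simp
    finally show ?thesis .
  qed
  have "w y * gauss_pdf \<sigma> \<mu> y * (y \<bullet> u) \<le> exp ((\<eta> *\<^sub>R u) \<bullet> y) * gauss_pdf \<sigma> \<mu> y / (exp 1 * \<eta>)" for y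
  proof -
    have "gauss_pdf \<sigma> \<mu> y * (w y * (y \<bullet> u)) \<le> gauss_pdf \<sigma> \<mu> y * (exp (\<eta> * (y \<bullet> u)) / (exp 1 * \<eta>))"
      by (intro mult_left_mono scalar gauss_pdf_nonneg)
    then show ?thesis
      by (simp add: algebra_simps inner_commute)
  qed
  then have "(\<integral>y. w y * gauss_pdf \<sigma> \<mu> y * (y \<bullet> u) \<partial>lborel)
      \<le> (\<integral>y. exp ((\<eta> *\<^sub>R u) \<bullet> y) * gauss_pdf \<sigma> \<mu> y / (exp 1 * \<eta>) \<partial>lborel)"
    using assms(1,2)
    by (intro integral_mono' integrable_divide integrable_exp_inner_gauss_pdf)
      (auto simp: gauss_pdf_nonneg simp del: inner_scaleR_left)
  also have "\<dots> = gauss_mgf \<sigma> \<mu> (\<eta> *\<^sub>R u) / (exp 1 * \<eta>)"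
    using assms(1) by (simp only: integral_divide_zero integral_exp_inner_gauss_pdf)
  finally show ?thesis .
qed

lemma integral_bounded_weight_gauss_pdf_inner_le_norm:
  fixes \<mu> u :: "'a::euclidean_space"
  assumes "\<sigma> > 0" "\<sigma> \<le> norm \<mu>" and "\<And>y. 0 \<le> w y" "\<And>y. w y \<le> 1"
  shows "(\<integral>y. w y * gauss_pdf \<sigma> \<mu> y * (y \<bullet> u) \<partial>lborel) \<le> 2 * norm u * norm \<mu>"
proof (cases "u = 0")
  case True
  then show ?thesis by simp
next
  case False
  define \<eta> where "\<eta> = 1 / (norm u * norm \<mu>)"
  have pos: "norm u > 0" "norm \<mu> > 0"
    using False assms(1,2) by auto
  then have "\<eta> > 0"
    by (simp add: \<eta>_def)
  have "(\<eta> *\<^sub>R u) \<bullet> \<mu> \<le> norm (\<eta> *\<^sub>R u) * norm \<mu>"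
    by (rule norm_cauchy_schwarz)
  also have "\<dots> = 1"
    using pos by (simp add: \<eta>_def)
  finally have "(\<eta> *\<^sub>R u) \<bullet> \<mu> \<le> 1" .
  moreover have "\<sigma>\<^sup>2 * (norm (\<eta> *\<^sub>R u))\<^sup>2 / 2 \<le> 1/2"
  proof -
    have "\<sigma>\<^sup>2 \<le> (norm \<mu>)\<^sup>2"
      using assms(1,2) by (intro power_mono) auto
    then show ?thesis
      using pos by (simp add: \<eta>_def field_simps power2_eq_square)
  qed
  ultimately have "gauss_mgf \<sigma> \<mu> (\<eta> *\<^sub>R u) \<le> exp 1 * exp (1/2)"
    unfolding gauss_mgf_def exp_add[symmetric] by simp
  also have "exp (1/2 :: real) \<le> 2"
    by (rule exp_half_le_2)
  finally have "gauss_mgf \<sigma> \<mu> (\<eta> *\<^sub>R u) / (exp 1 * \<eta>) \<le> 2 * norm u * norm \<mu>"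
    using pos by (simp add: \<eta>_def field_simps)
  then show ?thesis
    using integral_bounded_weight_gauss_pdf_inner_le[where \<mu> = \<mu> and u = u and w = w, OF assms(1) \<open>\<eta> > 0\<close> assms(3,4)]
    by linarith
qed

lemma integral_exp_bounded_weight_gauss_pdf_inner_le:
  fixes \<mu> u c :: "'a::euclidean_space"
  assumes "\<sigma> > 0" "K > 0" and w: "\<And>y. 0 \<le> w y" "\<And>y. w y \<le> exp (c \<bullet> y)"
  shows "(\<integral>y. w y * gauss_pdf \<sigma> \<mu> y * (y \<bullet> u) \<partial>lborel)
    \<le> K / exp 1 * (gauss_mgf \<sigma> \<mu> (c + (1/K) *\<^sub>R u) + gauss_mgf \<sigma> \<mu> (c - (1/K) *\<^sub>R u))"
proof -
  define R where "R y = K / exp 1 *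
    (exp ((c + (1/K) *\<^sub>R u) \<bullet> y) * gauss_pdf \<sigma> \<mu> y + exp ((c - (1/K) *\<^sub>R u) \<bullet> y) * gauss_pdf \<sigma> \<mu> y)"
    for y
  have abs_le: "\<bar>x\<bar> \<le> K / exp 1 * (exp (x / K) + exp (- x / K))" for x
    using exp_one_mult_abs_le[of "x / K"] \<open>K > 0\<close> by (simp add: field_simps abs_div)
  have "w y * gauss_pdf \<sigma> \<mu> y * (y \<bullet> u) \<le> R y" for y
  proof -
    have "w y * gauss_pdf \<sigma> \<mu> y * (y \<bullet> u) \<le> w y * gauss_pdf \<sigma> \<mu> y * \<bar>y \<bullet> u\<bar>"
      using w(1)[of y] gauss_pdf_nonneg[of \<sigma> \<mu> y] by (intro mult_left_mono) auto
    also have "\<dots> \<le> exp (c \<bullet> y) * gauss_pdf \<sigma> \<mu> y * \<bar>y \<bullet> u\<bar>"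
      using w(2)[of y] gauss_pdf_nonneg[of \<sigma> \<mu> y] by (intro mult_right_mono) auto
    also have "\<dots> \<le> exp (c \<bullet> y) * gauss_pdf \<sigma> \<mu> y * (K / exp 1 * (exp ((y \<bullet> u) / K) + exp (- (y \<bullet> u) / K)))"
      using gauss_pdf_nonneg[of \<sigma> \<mu> y] by (intro mult_left_mono abs_le) auto
    also have "\<dots> = R y"
    proof -
      have "(c + (1/K) *\<^sub>R u) \<bullet> y = c \<bullet> y + (y \<bullet> u) / K"
        "(c - (1/K) *\<^sub>R u) \<bullet> y = c \<bullet> y + - (y \<bullet> u) / K"
        by (simp_all only: inner_add_left inner_diff_left inner_scaleR_left) (simp_all add: inner_commute)
      then have "exp ((c + (1/K) *\<^sub>R u) \<bullet> y) = exp (c \<bullet> y) * exp ((y \<bullet> u) / K)"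
        "exp ((c - (1/K) *\<^sub>R u) \<bullet> y) = exp (c \<bullet> y) * exp (- (y \<bullet> u) / K)"
        by (simp_all only: exp_add)
      then show ?thesis
        unfolding R_def by (simp only: ring_distribs mult_ac)
    qed
    finally show ?thesis .
  qed
  then have "(\<integral>y. w y * gauss_pdf \<sigma> \<mu> y * (y \<bullet> u) \<partial>lborel) \<le> (\<integral>y. R y \<partial>lborel)"
    unfolding R_def using assms(1,2)
    by (intro integral_mono' integrable_mult_right Bochner_Integration.integrable_add
        integrable_exp_inner_gauss_pdf) (auto simp: gauss_pdf_nonneg)
  also have "\<dots> = K / exp 1 * (gauss_mgf \<sigma> \<mu> (c + (1/K) *\<^sub>R u) + gauss_mgf \<sigma> \<mu> (c - (1/K) *\<^sub>R u))"
    unfolding R_def using assms(1)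
    by (simp add: Bochner_Integration.integral_add integrable_exp_inner_gauss_pdf
        integral_exp_inner_gauss_pdf del: inner_add_left inner_diff_left)
  finally show ?thesis .
qed

section \<open>The weight \<open>\<omega>\<close>\<close>

lemma omega_nonneg: "0 \<le> omega t"
  unfolding omega_def by (simp add: add_pos_pos less_imp_le)

lemma omega_le_1: "omega t \<le> 1"
  unfolding omega_def by (simp add: add_pos_pos)

lemma borel_measurable_omega[measurable]: "omega \<in> borel_measurable borel"
  unfolding omega_def[abs_def] by measurable

lemma omega_uminus: "omega (- t) = 1 - omega t"
proof -
  have "1 + exp (- 2 * t) > 0" "1 + exp (2 * t) > 0"
    by (auto intro: add_pos_pos)
  then show ?thesis
    unfolding omega_def by (simp add: exp_minus field_simps)
qed

lemma omega_le_exp: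
  assumes "0 \<le> l" "l \<le> 1"
  shows "omega t \<le> exp (2 * l * t)"
proof (cases "t \<ge> 0")
  case True
  then show ?thesis
    using omega_le_1[of t] assms by (smt (verit) one_le_exp_iff zero_le_mult_iff)
next
  case False
  have "omega t \<le> 1 / exp (- 2 * t)"
    unfolding omega_def by (rule divide_left_mono) (auto intro!: add_pos_pos mult_pos_pos)
  also have "\<dots> = exp (2 * t)"
    by (simp add: exp_minus divide_inverse)
  also have "\<dots> \<le> exp (2 * l * t)"
    using False assms by (simp add: mult_le_cancel_right1)
  finally show ?thesis .
qed

lemma
  fixes \<mu> \<theta> u :: "'a::euclidean_space"
  assumes "\<sigma> > 0"
  shows integrable_omega_gauss_pdf_inner:
      "integrable lborel (\<lambda>y. omega ((\<theta> \<bullet> y) / \<sigma>\<^sup>2) * gauss_pdf \<sigma> \<mu> y * (y \<bullet> u))"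
    and integrable_one_minus_omega_gauss_pdf_inner:
      "integrable lborel (\<lambda>y. (1 - omega ((\<theta> \<bullet> y) / \<sigma>\<^sup>2)) * gauss_pdf \<sigma> \<mu> y * (y \<bullet> u))"
proof -
  have "\<bar>omega t\<bar> \<le> 1" "\<bar>1 - omega t\<bar> \<le> 1" for t
    using omega_nonneg[of t] omega_le_1[of t] by auto
  then show "integrable lborel (\<lambda>y. omega ((\<theta> \<bullet> y) / \<sigma>\<^sup>2) * gauss_pdf \<sigma> \<mu> y * (y \<bullet> u))"
    and "integrable lborel (\<lambda>y. (1 - omega ((\<theta> \<bullet> y) / \<sigma>\<^sup>2)) * gauss_pdf \<sigma> \<mu> y * (y \<bullet> u))"
    by (intro integrable_weight_gauss_pdf_inner assms; simp)+
qed

section \<open>The population EM operator\<close>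

lemma inner_M_pop_eq:
  fixes \<theta>s \<theta> u :: "'a::euclidean_space"
  assumes "\<sigma> > 0"
  shows "M_pop \<sigma> \<theta>s \<theta> \<bullet> u
    = (\<integral>y. omega ((\<theta> \<bullet> y) / \<sigma>\<^sup>2) * gauss_pdf \<sigma> \<theta>s y * (y \<bullet> u) \<partial>lborel)
    + (\<integral>y. omega ((\<theta> \<bullet> y) / \<sigma>\<^sup>2) * gauss_pdf \<sigma> (- \<theta>s) y * (y \<bullet> u) \<partial>lborel)"
proof -
  define w where "w y = omega ((\<theta> \<bullet> y) / \<sigma>\<^sup>2)" for y :: 'a
  define p where "p y = 1/2 * gauss_pdf \<sigma> \<theta>s y + 1/2 * gauss_pdf \<sigma> (- \<theta>s) y" for y :: 'a
  have [measurable]: "w \<in> borel_measurable borel"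
    unfolding w_def[abs_def] by measurable
  have [measurable]: "p \<in> borel_measurable borel"
    unfolding p_def[abs_def] by measurable
  have p_split: "p y * w y * (y \<bullet> v)
      = 1/2 * (w y * gauss_pdf \<sigma> \<theta>s y * (y \<bullet> v)) + 1/2 * (w y * gauss_pdf \<sigma> (- \<theta>s) y * (y \<bullet> v))"
    for y v
    unfolding p_def by (simp add: algebra_simps)
  have int: "integrable lborel (\<lambda>y. w y * gauss_pdf \<sigma> \<mu> y * (y \<bullet> v))" for \<mu> v
    unfolding w_def by (rule integrable_omega_gauss_pdf_inner[OF assms])
  have int_vec: "integrable lborel (\<lambda>y. p y *\<^sub>R (w y *\<^sub>R y))"
    by (rule integrable_euclidean_componentwise)
      (simp add: mult.assoc[symmetric] p_split Bochner_Integration.integrable_add integrable_mult_right int)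
  have "M_pop \<sigma> \<theta>s \<theta> = 2 *\<^sub>R (\<integral>y. p y *\<^sub>R (w y *\<^sub>R y) \<partial>lborel)"
    unfolding M_pop_def mix_law_def w_def[symmetric] p_def[symmetric]
    by (subst integral_density) (auto simp: p_def gauss_pdf_nonneg)
  then have "M_pop \<sigma> \<theta>s \<theta> \<bullet> u = 2 * (\<integral>y. p y * w y * (y \<bullet> u) \<partial>lborel)"
    using int_vec by (simp add: integral_inner_left[symmetric] mult.assoc)
  also have "\<dots> = (\<integral>y. w y * gauss_pdf \<sigma> \<theta>s y * (y \<bullet> u) \<partial>lborel)
      + (\<integral>y. w y * gauss_pdf \<sigma> (- \<theta>s) y * (y \<bullet> u) \<partial>lborel)"
    unfolding p_split using int by (simp add: Bochner_Integration.integral_add)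
  finally show ?thesis
    unfolding w_def .
qed

text \<open>Reflecting \<open>y \<mapsto> - y\<close> exchanges the two mixture components, and \<open>\<omega>(-t) = 1 - \<omega>(t)\<close>.\<close>
lemma integral_omega_gauss_pdf_uminus:
  fixes \<mu> \<theta> u :: "'a::euclidean_space"
  shows "(\<integral>y. omega ((\<theta> \<bullet> y) / \<sigma>\<^sup>2) * gauss_pdf \<sigma> (- \<mu>) y * (y \<bullet> u) \<partial>lborel)
    = - (\<integral>y. (1 - omega ((\<theta> \<bullet> y) / \<sigma>\<^sup>2)) * gauss_pdf \<sigma> \<mu> y * (y \<bullet> u) \<partial>lborel)"
proof -
  have "gauss_pdf \<sigma> (- \<mu>) (- y) = gauss_pdf \<sigma> \<mu> y" for y
    unfolding gauss_pdf_def by (simp add: norm_minus_commute)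
  then have reflected: "omega ((\<theta> \<bullet> (0 - y)) / \<sigma>\<^sup>2) * gauss_pdf \<sigma> (- \<mu>) (0 - y) * ((0 - y) \<bullet> u)
      = - ((1 - omega ((\<theta> \<bullet> y) / \<sigma>\<^sup>2)) * gauss_pdf \<sigma> \<mu> y * (y \<bullet> u))" for y
    using omega_uminus[of "(\<theta> \<bullet> y) / \<sigma>\<^sup>2"] by simp
  have "(\<integral>y. omega ((\<theta> \<bullet> y) / \<sigma>\<^sup>2) * gauss_pdf \<sigma> (- \<mu>) y * (y \<bullet> u) \<partial>lborel)
      = (\<integral>y. omega ((\<theta> \<bullet> (0 - y)) / \<sigma>\<^sup>2) * gauss_pdf \<sigma> (- \<mu>) (0 - y) * ((0 - y) \<bullet> u) \<partial>lborel)"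
    by (rule lborel_integral_reflect) measurable
  then show ?thesis
    by (simp only: reflected Bochner_Integration.integral_minus)
qed

lemma inner_M_pop_eq_reflected:
  fixes \<theta>s \<theta> u :: "'a::euclidean_space"
  assumes "\<sigma> > 0"
  shows "M_pop \<sigma> \<theta>s \<theta> \<bullet> u
    = \<theta>s \<bullet> u - 2 * (\<integral>y. (1 - omega ((\<theta> \<bullet> y) / \<sigma>\<^sup>2)) * gauss_pdf \<sigma> \<theta>s y * (y \<bullet> u) \<partial>lborel)"
proof -
  have "omega ((\<theta> \<bullet> y) / \<sigma>\<^sup>2) * gauss_pdf \<sigma> \<theta>s y * (y \<bullet> u)
      = gauss_pdf \<sigma> \<theta>s y * (y \<bullet> u) - (1 - omega ((\<theta> \<bullet> y) / \<sigma>\<^sup>2)) * gauss_pdf \<sigma> \<theta>s y * (y \<bullet> u)" for y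
    by (simp add: algebra_simps)
  then have "(\<integral>y. omega ((\<theta> \<bullet> y) / \<sigma>\<^sup>2) * gauss_pdf \<sigma> \<theta>s y * (y \<bullet> u) \<partial>lborel)
      = \<theta>s \<bullet> u - (\<integral>y. (1 - omega ((\<theta> \<bullet> y) / \<sigma>\<^sup>2)) * gauss_pdf \<sigma> \<theta>s y * (y \<bullet> u) \<partial>lborel)"
    using assms by (simp add: Bochner_Integration.integral_diff integrable_gauss_pdf_inner
        integrable_one_minus_omega_gauss_pdf_inner integral_gauss_pdf_inner)
  then show ?thesis
    unfolding inner_M_pop_eq[OF assms] integral_omega_gauss_pdf_uminus by simp
qed

lemma norm_M_pop_le:
  fixes \<theta>s \<theta> :: "'a::euclidean_space"
  assumes "\<sigma> > 0" "\<sigma> \<le> norm \<theta>s"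
  shows "norm (M_pop \<sigma> \<theta>s \<theta>) \<le> 4 * norm \<theta>s"
proof -
  define M where "M = M_pop \<sigma> \<theta>s \<theta>"
  have "norm M * norm M = M \<bullet> M"
    by (simp add: power2_norm_eq_inner[symmetric] power2_eq_square)
  also have "\<dots> \<le> 2 * norm M * norm \<theta>s + 2 * norm M * norm (- \<theta>s)"
    unfolding M_def inner_M_pop_eq[OF assms(1)]
    using assms omega_nonneg omega_le_1
    by (intro add_mono integral_bounded_weight_gauss_pdf_inner_le_norm) auto
  finally have "norm M * norm M \<le> norm M * (4 * norm \<theta>s)"
    by simp
  then show ?thesis
    unfolding M_def[symmetric] by (cases "M = 0") auto
qed

lemma chernoff_quadratic_le:
  fixes N p q \<sigma> a r L c :: real
  assumes "\<sigma> > 0" "0 < a" "1 \<le> r" "a * N \<le> p" "q \<le> r\<^sup>2 * N"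
    and snr: "5 * L * r\<^sup>2 * \<sigma>\<^sup>2 \<le> a\<^sup>2 * N" and c: "c = a / (r\<^sup>2 * \<sigma>\<^sup>2)"
  shows "- c * p + \<sigma>\<^sup>2 * c\<^sup>2 * q / 2 \<le> - 5 * L / 2"
proof -
  have "r > 0" "c \<ge> 0"
    using assms by (auto simp: c)
  have "c * (a * N) \<le> c * p" "\<sigma>\<^sup>2 * c\<^sup>2 * q / 2 \<le> \<sigma>\<^sup>2 * c\<^sup>2 * (r\<^sup>2 * N) / 2"
    using assms \<open>c \<ge> 0\<close> by (intro divide_right_mono mult_left_mono; simp)+
  then have "- c * p + \<sigma>\<^sup>2 * c\<^sup>2 * q / 2 \<le> - c * (a * N) + \<sigma>\<^sup>2 * c\<^sup>2 * (r\<^sup>2 * N) / 2"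
    by linarith
  also have "\<dots> = - a\<^sup>2 * N / (2 * r\<^sup>2 * \<sigma>\<^sup>2)"
    using \<open>r > 0\<close> \<open>\<sigma> > 0\<close> by (simp add: c field_simps power2_eq_square)
  also have "\<dots> \<le> - 5 * L / 2"
    using snr \<open>r > 0\<close> \<open>\<sigma> > 0\<close> by (simp add: field_simps)
  finally show ?thesis .
qed

lemma power2_le_mult_if_snr:
  fixes N \<sigma> a r L :: real
  assumes "1/2 \<le> L" "1 \<le> r" "a\<^sup>2 \<le> 1" "0 \<le> N" "5 * L * r\<^sup>2 * \<sigma>\<^sup>2 \<le> a\<^sup>2 * N"
  shows "\<sigma>\<^sup>2 \<le> L * N"
proof -
  have "5 * L * \<sigma>\<^sup>2 \<le> 5 * L * \<sigma>\<^sup>2 * r\<^sup>2"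
    using mult_left_mono[of 1 "r\<^sup>2" "5 * L * \<sigma>\<^sup>2"] assms by (simp add: one_le_power)
  also have "\<dots> \<le> a\<^sup>2 * N"
    using assms(5) by (simp add: mult_ac)
  also have "\<dots> \<le> N"
    using mult_right_mono[OF assms(3,4)] by simp
  finally have "5 * L * \<sigma>\<^sup>2 \<le> N" .
  have "1 \<le> 5 * L * L"
    using mult_mono[OF \<open>1/2 \<le> L\<close> \<open>1/2 \<le> L\<close>] \<open>1/2 \<le> L\<close> by simp
  then have "\<sigma>\<^sup>2 \<le> L * (5 * L * \<sigma>\<^sup>2)"
    using mult_right_mono[of 1 "5 * L * L" "\<sigma>\<^sup>2"] by (simp add: mult_ac)
  also have "\<dots> \<le> L * N"
    using \<open>5 * L * \<sigma>\<^sup>2 \<le> N\<close> \<open>1/2 \<le> L\<close> by (intro mult_left_mono) auto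
  finally show ?thesis .
qed

lemma gauss_mgf_exponent_le:
  fixes N p q \<sigma> a r L c \<epsilon> :: real
  assumes "\<sigma> > 0" "N > 0" "0 < a" "a \<le> 1" "1 \<le> r" "1/2 \<le> L" "\<bar>\<epsilon>\<bar> \<le> 1"
    and p: "a * N \<le> p" "p \<le> r * N" and q: "q \<le> r\<^sup>2 * N"
    and snr: "5 * L * r\<^sup>2 * \<sigma>\<^sup>2 \<le> a\<^sup>2 * N" and c: "c = a / (r\<^sup>2 * \<sigma>\<^sup>2)"
  shows "- c * p + \<epsilon> + \<sigma>\<^sup>2 * (c\<^sup>2 * q - 2 * c * \<epsilon> * p / N + \<epsilon>\<^sup>2 / N) / 2 \<le> 1 - 2 * L"
proof -
  have "r > 0" "c \<ge> 0"
    using assms by (auto simp: c)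
  have "0 < p"
    using p(1) mult_pos_pos[OF \<open>0 < a\<close> \<open>N > 0\<close>] by linarith
  define x where "x = \<sigma>\<^sup>2 * c * p / N"
  have "x = a / r\<^sup>2 * (p / N)"
    using \<open>\<sigma> > 0\<close> by (simp add: x_def c)
  also have "\<dots> \<le> a / r\<^sup>2 * r"
    using p \<open>N > 0\<close> \<open>0 < a\<close> by (intro mult_left_mono) (auto simp: field_simps)
  also have "\<dots> \<le> 1"
    using assms \<open>r > 0\<close> by (simp add: power2_eq_square)
  finally have "0 \<le> 1 - x" "1 - x \<le> 1"
    using \<open>0 < p\<close> \<open>N > 0\<close> \<open>c \<ge> 0\<close> by (auto simp: x_def)
  then have linear: "\<epsilon> * (1 - x) \<le> 1"
    using \<open>\<bar>\<epsilon>\<bar> \<le> 1\<close> mult_right_mono[OF abs_ge_self \<open>0 \<le> 1 - x\<close>, of \<epsilon>]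
      mult_le_one[of "\<bar>\<epsilon>\<bar>" "1 - x"] by linarith
  have "\<sigma>\<^sup>2 * \<epsilon>\<^sup>2 \<le> L * N"
    using power2_le_mult_if_snr[OF \<open>1/2 \<le> L\<close> \<open>1 \<le> r\<close> _ _ snr] \<open>N > 0\<close> mult_left_le_one_le[of "\<sigma>\<^sup>2" "\<epsilon>\<^sup>2"]
      assms(3,4,7) by (simp add: abs_square_le_1 power_le_one mult.commute)
  then have const: "\<sigma>\<^sup>2 * \<epsilon>\<^sup>2 / (2 * N) \<le> L / 2"
    using \<open>N > 0\<close> by (simp add: field_simps)
  have "- c * p + \<epsilon> + \<sigma>\<^sup>2 * (c\<^sup>2 * q - 2 * c * \<epsilon> * p / N + \<epsilon>\<^sup>2 / N) / 2
      = (- c * p + \<sigma>\<^sup>2 * c\<^sup>2 * q / 2) + \<epsilon> * (1 - x) + \<sigma>\<^sup>2 * \<epsilon>\<^sup>2 / (2 * N)"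
    using \<open>N > 0\<close> by (simp add: x_def field_simps)
  then show ?thesis
    using chernoff_quadratic_le[OF \<open>\<sigma> > 0\<close> \<open>0 < a\<close> \<open>1 \<le> r\<close> p(1) q snr c] linear const
    by linarith
qed

lemma gauss_mgf_chernoff_le:
  fixes \<theta>s \<theta> :: "'a::euclidean_space"
  assumes "\<sigma> > 0" "\<theta>s \<noteq> 0" "0 < a" "a \<le> 1" "1 \<le> r" "0 < \<delta>" "\<delta> \<le> 1" "\<bar>\<epsilon>\<bar> \<le> 1"
    and H: "a * (norm \<theta>s)\<^sup>2 \<le> \<theta> \<bullet> \<theta>s" and B: "norm \<theta> \<le> r * norm \<theta>s"
    and snr: "5 * ln (2 / \<delta>) * r\<^sup>2 \<le> a\<^sup>2 * (norm \<theta>s / \<sigma>)\<^sup>2"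
  shows "gauss_mgf \<sigma> \<theta>s ((- (a / (r\<^sup>2 * \<sigma>\<^sup>2))) *\<^sub>R \<theta> + (\<epsilon> / (norm \<theta>s)\<^sup>2) *\<^sub>R \<theta>s)
    \<le> exp 1 * (\<delta> / 2)\<^sup>2"
proof -
  define N L c where "N = (norm \<theta>s)\<^sup>2" and "L = ln (2 / \<delta>)" and "c = a / (r\<^sup>2 * \<sigma>\<^sup>2)"
  have "N > 0" "1/2 \<le> L"
    using assms ln_two_div_ge[of \<delta>] by (auto simp: N_def L_def)
  have "((- c) *\<^sub>R \<theta> + (\<epsilon> / N) *\<^sub>R \<theta>s) \<bullet> \<theta>s + \<sigma>\<^sup>2 * (norm ((- c) *\<^sub>R \<theta> + (\<epsilon> / N) *\<^sub>R \<theta>s))\<^sup>2 / 2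
      = - c * (\<theta> \<bullet> \<theta>s) + \<epsilon> + \<sigma>\<^sup>2 * (c\<^sup>2 * (norm \<theta>)\<^sup>2 - 2 * c * \<epsilon> * (\<theta> \<bullet> \<theta>s) / N + \<epsilon>\<^sup>2 / N) / 2"
    unfolding norm_scaleR_add_scaleR_power2 inner_add_left inner_scaleR_left
      power2_norm_eq_inner[symmetric] N_def[symmetric]
    using \<open>N > 0\<close> by (simp add: field_simps power2_eq_square)
  also have "\<dots> \<le> 1 - 2 * L"
  proof (rule gauss_mgf_exponent_le[OF \<open>\<sigma> > 0\<close> \<open>N > 0\<close> assms(3-5) \<open>1/2 \<le> L\<close> assms(8)])
    show "a * N \<le> \<theta> \<bullet> \<theta>s"
      using H by (simp add: N_def)
    have "\<theta> \<bullet> \<theta>s \<le> norm \<theta> * norm \<theta>s"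
      by (rule norm_cauchy_schwarz)
    also have "\<dots> \<le> r * norm \<theta>s * norm \<theta>s"
      using B by (simp add: mult_right_mono)
    finally show "\<theta> \<bullet> \<theta>s \<le> r * N"
      by (simp add: N_def power2_eq_square mult.assoc)
    show "(norm \<theta>)\<^sup>2 \<le> r\<^sup>2 * N"
      using power_mono[OF B norm_ge_zero, of 2] by (simp add: N_def power_mult_distrib)
    show "5 * L * r\<^sup>2 * \<sigma>\<^sup>2 \<le> a\<^sup>2 * N"
      using snr \<open>\<sigma> > 0\<close> by (simp add: L_def N_def field_simps)
  qed (simp add: c_def)
  also have "exp (1 - 2 * L) = exp 1 * (exp (- L))\<^sup>2"
    by (simp add: exp_diff exp_minus power2_eq_square field_simps exp_add[symmetric])
  also have "exp (- L) = \<delta> / 2"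
    using assms by (simp add: L_def exp_minus)
  finally show ?thesis
    unfolding gauss_mgf_def N_def c_def by simp
qed

lemma inner_M_pop_ge:
  fixes \<theta>s \<theta> :: "'a::euclidean_space"
  assumes "\<sigma> > 0" "\<theta>s \<noteq> 0" "0 < a" "a \<le> 1" "1 \<le> r" "0 < \<delta>" "\<delta> \<le> 1"
    and H: "a * (norm \<theta>s)\<^sup>2 \<le> \<theta> \<bullet> \<theta>s" and B: "norm \<theta> \<le> r * norm \<theta>s"
    and snr: "5 * ln (2 / \<delta>) * r\<^sup>2 \<le> a\<^sup>2 * (norm \<theta>s / \<sigma>)\<^sup>2"
  shows "(1 - \<delta>) * (norm \<theta>s)\<^sup>2 \<le> M_pop \<sigma> \<theta>s \<theta> \<bullet> \<theta>s"
proof -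
  define N c where "N = (norm \<theta>s)\<^sup>2" and "c = a / (r\<^sup>2 * \<sigma>\<^sup>2)"
  note mgf = gauss_mgf_chernoff_le[OF assms(1-7) _ H B snr, folded N_def c_def]
  have "N > 0" "0 \<le> a / (2 * r\<^sup>2)" "a / (2 * r\<^sup>2) \<le> 1"
    using assms mult_mono[of 1 r 1 r] by (auto simp: N_def field_simps power2_eq_square)
  then have weight: "1 - omega ((\<theta> \<bullet> y) / \<sigma>\<^sup>2) \<le> exp (((- c) *\<^sub>R \<theta>) \<bullet> y)" for y
    using omega_le_exp[of "a / (2 * r\<^sup>2)" "- ((\<theta> \<bullet> y) / \<sigma>\<^sup>2)"] assms
    by (simp add: omega_uminus c_def field_simps)
  have "(\<integral>y. (1 - omega ((\<theta> \<bullet> y) / \<sigma>\<^sup>2)) * gauss_pdf \<sigma> \<theta>s y * (y \<bullet> \<theta>s) \<partial>lborel)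
      \<le> N / exp 1 * (gauss_mgf \<sigma> \<theta>s ((- c) *\<^sub>R \<theta> + (1 / N) *\<^sub>R \<theta>s)
                    + gauss_mgf \<sigma> \<theta>s ((- c) *\<^sub>R \<theta> - (1 / N) *\<^sub>R \<theta>s))"
    by (rule integral_exp_bounded_weight_gauss_pdf_inner_le[OF \<open>\<sigma> > 0\<close> \<open>N > 0\<close>])
      (use weight omega_le_1 in auto)
  also have "\<dots> \<le> N / exp 1 * (exp 1 * (\<delta> / 2)\<^sup>2 + exp 1 * (\<delta> / 2)\<^sup>2)"
    using \<open>N > 0\<close> mgf[of 1] mgf[of "- 1"] by (intro mult_left_mono add_mono) auto
  also have "\<dots> = N * \<delta>\<^sup>2 / 2"
    by (simp add: power2_eq_square field_simps)
  finally have "N - N * \<delta>\<^sup>2 \<le> M_pop \<sigma> \<theta>s \<theta> \<bullet> \<theta>s"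
    unfolding inner_M_pop_eq_reflected[OF \<open>\<sigma> > 0\<close>] by (simp add: N_def power2_norm_eq_inner)
  moreover have "N * \<delta>\<^sup>2 \<le> N * \<delta>"
    using assms \<open>N > 0\<close> by (simp add: power2_eq_square mult_le_cancel_left1)
  ultimately show ?thesis
    by (simp add: N_def algebra_simps)
qed

section \<open>The sample EM operator\<close>

lemma norm_M_samp_le:
  fixes y :: "nat \<Rightarrow> 'a::euclidean_space"
  shows "norm (M_samp \<sigma> y n \<theta>) \<le> 3 / real n * (\<Sum>i<n. norm (y i))"
proof -
  have "norm (\<Sum>i<n. omega ((y i \<bullet> \<theta>) / \<sigma>\<^sup>2) *\<^sub>R y i) \<le> (\<Sum>i<n. norm (y i))"
    using omega_nonneg omega_le_1
    by (intro order.trans[OF norm_sum] sum_mono) (simp add: mult_left_le_one_le)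
  then have "norm ((2 / real n) *\<^sub>R (\<Sum>i<n. omega ((y i \<bullet> \<theta>) / \<sigma>\<^sup>2) *\<^sub>R y i)) \<le> 2 / real n * (\<Sum>i<n. norm (y i))"
    by (simp add: divide_right_mono)
  moreover have "norm ((1 / real n) *\<^sub>R (\<Sum>i<n. y i)) \<le> 1 / real n * (\<Sum>i<n. norm (y i))"
    by (simp add: divide_right_mono norm_sum)
  ultimately have "norm (M_samp \<sigma> y n \<theta>) \<le> 2 / real n * (\<Sum>i<n. norm (y i)) + 1 / real n * (\<Sum>i<n. norm (y i))"
    unfolding M_samp_def by (smt (verit) norm_triangle_ineq4)
  then show ?thesis
    by (simp add: distrib_right[symmetric] add_divide_distrib[symmetric])
qed

lemma bdd_above_norm_M_samp_minus_M_pop: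
  fixes \<theta>s :: "'a::euclidean_space"
  assumes "\<sigma> > 0" "\<sigma> \<le> norm \<theta>s"
  shows "bdd_above ((\<lambda>\<theta>. norm (M_samp \<sigma> y n \<theta> - M_pop \<sigma> \<theta>s \<theta>)) ` A)"
proof (rule bdd_aboveI2)
  fix \<theta>
  have "norm (M_samp \<sigma> y n \<theta> - M_pop \<sigma> \<theta>s \<theta>) \<le> norm (M_samp \<sigma> y n \<theta>) + norm (M_pop \<sigma> \<theta>s \<theta>)"
    by (rule norm_triangle_ineq4)
  also have "\<dots> \<le> 3 / real n * (\<Sum>i<n. norm (y i)) + 4 * norm \<theta>s"
    by (intro add_mono norm_M_samp_le norm_M_pop_le assms)
  finally show "norm (M_samp \<sigma> y n \<theta> - M_pop \<sigma> \<theta>s \<theta>) \<le> 3 / real n * (\<Sum>i<n. norm (y i)) + 4 * norm \<theta>s" .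
qed

lemma norm_M_samp_minus_M_pop_le_S_dev:
  fixes \<theta>s :: "'a::euclidean_space"
  assumes "\<sigma> > 0" "\<sigma> \<le> norm \<theta>s" "\<theta> \<in> D_set \<theta>s a r"
  shows "norm (M_samp \<sigma> y n \<theta> - M_pop \<sigma> \<theta>s \<theta>) \<le> S_dev \<sigma> \<theta>s y n a r"
  unfolding S_dev_def using assms by (intro cSUP_upper bdd_above_norm_M_samp_minus_M_pop)

lemma snr_conditionD:
  fixes v :: "'a::real_normed_vector"
  assumes "\<sigma> > 0" "0 < a" "a \<le> 1" "1 \<le> r" "0 < \<delta>" "\<delta> \<le> 1"
    and "r \<le> a * (norm v / \<sigma>) / sqrt (5 * ln (2 / \<delta>))"
  shows "5 * ln (2 / \<delta>) * r\<^sup>2 \<le> a\<^sup>2 * (norm v / \<sigma>)\<^sup>2" and "\<sigma> \<le> norm v"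
proof -
  have "1 \<le> 5 * ln (2 / \<delta>)"
    using ln_two_div_ge[OF assms(5,6)] by linarith
  then have "5 * ln (2 / \<delta>) * r\<^sup>2 \<le> (a * (norm v / \<sigma>))\<^sup>2"
    by (intro power2_le_if_le_div_sqrt) (use assms(4,7) in auto)
  then show snr: "5 * ln (2 / \<delta>) * r\<^sup>2 \<le> a\<^sup>2 * (norm v / \<sigma>)\<^sup>2"
    by (simp only: power_mult_distrib)
  show "\<sigma> \<le> norm v"
    by (rule le_norm_if_snr[OF assms(1) \<open>1 \<le> 5 * ln (2 / \<delta>)\<close> assms(4,2,3) snr])
qed

theorem lemma4:
  fixes \<theta>s :: "'a::euclidean_space" and \<sigma> a \<kappa>1 \<kappa>2 r :: real
    and y :: "nat \<Rightarrow> 'a" and n :: nat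
  assumes "\<sigma> > 0" and "\<theta>s \<noteq> 0" and "n > 0"
    and "0 < a" "a < 1" "a < \<kappa>1" "\<kappa>1 < 1" "0 < \<kappa>2" "\<kappa>2 < 1" "r \<ge> 1"
    and "r \<le> a * (norm \<theta>s / \<sigma>) / sqrt (5 * ln (2 / (1 - a / \<kappa>1)))"
    and "4 / \<kappa>2 \<le> r"
    and "r \<le> a * (norm \<theta>s / \<sigma>) / sqrt (5 * ln (8 / \<kappa>2))"
    and "S_dev \<sigma> \<theta>s y n a r \<le> norm \<theta>s * min (a * (1 / \<kappa>1 - 1)) (r * (1 - \<kappa>2))"
  shows "M_samp \<sigma> y n ` D_set \<theta>s a r \<subseteq> D_set \<theta>s a r"
proof (rule image_subsetI)
  fix \<theta> assume \<theta>: "\<theta> \<in> D_set \<theta>s a r"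
  define \<delta> where "\<delta> = 1 - a / \<kappa>1"
  have \<delta>: "0 < \<delta>" "\<delta> \<le> 1" "1 - \<delta> = a / \<kappa>1"
    using assms(4-7) by (auto simp: \<delta>_def field_simps)
  note snr = snr_conditionD[OF assms(1,4) less_imp_le[OF assms(5)] assms(10) \<delta>(1,2) assms(11)[folded \<delta>_def]]
  have "norm (M_samp \<sigma> y n \<theta> - M_pop \<sigma> \<theta>s \<theta>) \<le> norm \<theta>s * min (a * (1 / \<kappa>1 - 1)) (r * (1 - \<kappa>2))"
    using norm_M_samp_minus_M_pop_le_S_dev[OF assms(1) snr(2) \<theta>, of y n] assms(14) by linarith
  then have dev: "norm (M_samp \<sigma> y n \<theta> - M_pop \<sigma> \<theta>s \<theta>) \<le> (a / \<kappa>1 - a) * norm \<theta>s"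
    "norm (M_samp \<sigma> y n \<theta> - M_pop \<sigma> \<theta>s \<theta>) \<le> r * (1 - \<kappa>2) * norm \<theta>s"
    by (auto simp: algebra_simps min_mult_distrib_left)
  have "(a / \<kappa>1) * (norm \<theta>s)\<^sup>2 \<le> M_pop \<sigma> \<theta>s \<theta> \<bullet> \<theta>s"
    using inner_M_pop_ge[OF assms(1,2,4) _ assms(10) \<delta>(1,2) _ _ snr(1)] \<theta> assms(5)
    unfolding \<delta>(3) D_set_def H_set_def B_set_def by auto
  then have "a * (norm \<theta>s)\<^sup>2 \<le> M_samp \<sigma> y n \<theta> \<bullet> \<theta>s"
    using inner_ge_if_norm_diff_le dev(1) by blast
  moreover have "4 * norm \<theta>s \<le> r * \<kappa>2 * norm \<theta>s"
    using assms(8,12) by (intro mult_right_mono) (auto simp: field_simps)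
  then have "norm (M_samp \<sigma> y n \<theta>) \<le> r * norm \<theta>s"
    using norm_triangle_sub[of "M_samp \<sigma> y n \<theta>" "M_pop \<sigma> \<theta>s \<theta>"] dev(2)
      norm_M_pop_le[OF assms(1) snr(2), of \<theta>]
    by (simp add: algebra_simps)
  ultimately show "M_samp \<sigma> y n \<theta> \<in> D_set \<theta>s a r"
    unfolding D_set_def H_set_def B_set_def by simp
qed

end
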